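(* Let $0<q<1$, $p=q^{1/2}$, $\alpha,\beta>-1$ real. Then $$\lim_{n\to\infty}x^n\,b_n^{(\alpha,\beta)}(1/x)=\Phi_{\alpha,\beta}(x),$$ uniformly on compact subsets of the complex $x$-plane (for $x=0$ the left side is interpreted as the value at $0$ of the polynomial $x^nb_n^{(\alpha,\beta)}(1/x)$).
   Context: Notation: $(a;p)_0=1$, $(a;p)_n=\prod_{j=0}^{n-1}(1-ap^j)$, $(a;p)_\infty=\prod_{j\ge0}(1-ap^j)$, $(a_1,\dots,a_m;p)_n=\prod_k(a_k;p)_n$; ${}_2\phi_1(a,b;c;p,z)=\sum_{k\ge0}\frac{(a,b;p)_k}{(p,c;p)_k}z^k$. The polynomials $b_n=b_n^{(\alpha,\beta)}$ are defined by $b_{-1}(\mu)=0$, $b_0(\mu)=1$, and for $k\ge0$ $$b_{k+1}(\mu)=\Big[\mu+\frac{(1-p^{\beta-\alpha})(1+p^{\alpha+\beta+3+2k})}{(1-p^{\alpha+\beta+2+2k})(1-p^{\alpha+\beta+4+2k})}p^{\alpha+3/2+k}\Big]b_k(\mu)+\frac{(1-p^{2\alpha+2+2k})(1-p^{2\beta+2+2k})\,p^{2k+\alpha+\beta+2}}{(1-p^{\alpha+\beta+1+2k})(1-p^{\alpha+\beta+2+2k})^2(1-p^{\alpha+\beta+3+2k})}\,b_{k-1}(\mu).$$ The entire function $\Phi_{\alpha,\beta}$ is $$\Phi_{\alpha,\beta}(y)=\frac{(p^{\beta+1};p)_\infty}{(p^{\alpha+\beta+2};p)_\infty}\sum_{k\ge0}\frac{(p^{\alpha+1},p^{1/2}y;p)_k}{(p;p)_k}\,p^{(\beta+1)k}\,(-p^{\alpha+3/2+k}y;p)_\infty,$$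 which equals $\frac{(p^{\beta+1},-p^{\alpha+3/2}y;p)_\infty}{(p^{\alpha+\beta+2};p)_\infty}{}_2\phi_1(p^{\alpha+1},p^{1/2}y;-p^{\alpha+3/2}y;p,p^{\beta+1})$ wherever the latter is defined. *)

theory Defs
  imports "HOL-Analysis.Analysis" "HOL-Computational_Algebra.Polynomial"
begin

definition qpoch :: "complex \<Rightarrow> complex \<Rightarrow> nat \<Rightarrow> complex" where
  "qpoch a p n = (\<Prod>j<n. 1 - a * p ^ j)"

definition qpoch_inf :: "complex \<Rightarrow> complex \<Rightarrow> complex" where
  "qpoch_inf a p = prodinf (\<lambda>j. 1 - a * p ^ j)"

definition bcoef_c :: "real \<Rightarrow> real \<Rightarrow> real \<Rightarrow> nat \<Rightarrow> real" where
  "bcoef_c p \<alpha> \<beta> k =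
     (1 - p powr (\<beta> - \<alpha>)) * (1 + p powr (\<alpha> + \<beta> + 3 + 2 * real k))
     / ((1 - p powr (\<alpha> + \<beta> + 2 + 2 * real k)) * (1 - p powr (\<alpha> + \<beta> + 4 + 2 * real k)))
     * p powr (\<alpha> + 3/2 + real k)"

definition bcoef_d :: "real \<Rightarrow> real \<Rightarrow> real \<Rightarrow> nat \<Rightarrow> real" where
  "bcoef_d p \<alpha> \<beta> k =
     (1 - p powr (2 * \<alpha> + 2 + 2 * real k)) * (1 - p powr (2 * \<beta> + 2 + 2 * real k))
       * p powr (2 * real k + \<alpha> + \<beta> + 2)
     / ((1 - p powr (\<alpha> + \<beta> + 1 + 2 * real k)) * (1 - p powr (\<alpha> + \<beta> + 2 + 2 * real k)) ^ 2
        * (1 - p powr (\<alpha> + \<beta> + 3 + 2 * real k)))"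

text \<open>bpair p a b n = (b_{n-1}, b_n), with b_{-1} = 0 and b_0 = 1.\<close>
fun bpair :: "real \<Rightarrow> real \<Rightarrow> real \<Rightarrow> nat \<Rightarrow> complex poly \<times> complex poly" where
  "bpair p \<alpha> \<beta> 0 = (0, 1)"
| "bpair p \<alpha> \<beta> (Suc k) =
     (let (bm, bk) = bpair p \<alpha> \<beta> k in
       (bk, [:complex_of_real (bcoef_c p \<alpha> \<beta> k), 1:] * bk
            + smult (complex_of_real (bcoef_d p \<alpha> \<beta> k)) bm))"

definition bpoly :: "real \<Rightarrow> real \<Rightarrow> real \<Rightarrow> nat \<Rightarrow> complex poly" where
  "bpoly p \<alpha> \<beta> n = snd (bpair p \<alpha> \<beta> n)"

text \<open>The polynomial x^n b_n(1/x), written via the coefficients of b_n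
  (so that its value at x = 0 is the value of this polynomial at 0).\<close>
definition brev :: "real \<Rightarrow> real \<Rightarrow> real \<Rightarrow> nat \<Rightarrow> complex \<Rightarrow> complex" where
  "brev p \<alpha> \<beta> n x = (\<Sum>k\<le>n. coeff (bpoly p \<alpha> \<beta> n) k * x ^ (n - k))"

definition Phi :: "real \<Rightarrow> real \<Rightarrow> real \<Rightarrow> complex \<Rightarrow> complex" where
  "Phi p \<alpha> \<beta> y =
     qpoch_inf (of_real (p powr (\<beta> + 1))) (of_real p) / qpoch_inf (of_real (p powr (\<alpha> + \<beta> + 2))) (of_real p)
     * (\<Sum>k. qpoch (of_real (p powr (\<alpha> + 1))) (of_real p) k
              * qpoch (of_real (p powr (1/2)) * y) (of_real p) k
              / qpoch (of_real p) (of_real p) k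
              * of_real (p powr ((\<beta> + 1) * real k))
              * qpoch_inf (- of_real (p powr (\<alpha> + 3/2 + real k)) * y) (of_real p))"

end

theory Submission
  imports Defs
begin

(*
  Write r_n(x) = x^n b_n(1/x). These polynomials satisfy the forward recurrence
  r_(k+1) = (1 + c_k x) r_k + d_k x^2 r_(k-1), while a contiguous relation of the 2phi1 series
  shows that F_n(x) = Phi_(alpha+n, beta+n)(x) satisfies the same recurrence backwards,
  F_n = (1 + c_n x) F_(n+1) + d_(n+1) x^2 F_(n+2). Pairing the two recurrences gives the
  conserved quantity Phi_(alpha,beta)(x) = F_0 = r_n F_n + d_n x^2 r_(n-1) F_(n+1).
  The coefficients c_k, d_k decay like p^k, so r_n and r_(n-1) stay bounded on compact sets and
  d_n -> 0; and F_n -> 1 uniformly on compact sets, because its parameters p^(alpha+n+1) and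
  p^(beta+n+1) tend to 0. Hence r_n -> Phi_(alpha,beta).
*)

section \<open>q-Pochhammer symbols\<close>

lemma qpoch_0 [simp]: "qpoch a p 0 = 1"
  by (simp add: qpoch_def)

lemma qpoch_Suc: "qpoch a p (Suc k) = qpoch a p k * (1 - a * p ^ k)"
  by (simp add: qpoch_def)

lemma qpoch_Suc_shift: "qpoch a p (Suc k) = (1 - a) * qpoch (a * p) p k"
proof -
  have "qpoch a p (Suc k) = (1 - a * p ^ 0) * (\<Prod>j<k. 1 - a * p ^ Suc j)"
    unfolding qpoch_def by (rule prod.lessThan_Suc_shift)
  then show ?thesis
    by (simp add: qpoch_def mult.assoc)
qed

lemma convergent_prod_qpoch:
  fixes a p :: complex
  assumes "norm p < 1"
  shows "convergent_prod (\<lambda>j. 1 - a * p ^ j)"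
proof -
  have "summable (\<lambda>j. norm a * norm p ^ j)"
    using assms by (intro summable_mult summable_geometric) auto
  then have "summable (\<lambda>j. norm ((1 - a * p ^ j) - 1))"
    by (simp add: norm_mult norm_power)
  then show ?thesis
    by (intro abs_convergent_prod_imp_convergent_prod summable_imp_abs_convergent_prod)
qed

lemma qpoch_inf_shift:
  assumes "norm p < 1"
  shows "qpoch_inf a p = (1 - a) * qpoch_inf (a * p) p"
proof -
  have "(\<lambda>j. 1 - (a * p) * p ^ j) = (\<lambda>j. 1 - a * p ^ Suc j)"
    by (auto simp: mult.assoc power_commutes)
  then have "(\<lambda>j. 1 - a * p ^ Suc j) has_prod qpoch_inf (a * p) p"
    unfolding qpoch_inf_def
    by (metis convergent_prod_has_prod convergent_prod_qpoch[OF assms])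
  from has_prod_Suc_imp[OF this] have "(\<lambda>j. 1 - a * p ^ j) has_prod (qpoch_inf (a * p) p * (1 - a))"
    by simp
  then show ?thesis
    unfolding qpoch_inf_def by (simp add: has_prod_iff mult.commute)
qed

lemma qpoch_LIMSEQ:
  assumes "norm p < 1"
  shows "(\<lambda>n. qpoch a p n) \<longlonglongrightarrow> qpoch_inf a p"
proof -
  have "(\<lambda>n. \<Prod>j\<le>n. 1 - a * p ^ j) \<longlonglongrightarrow> qpoch_inf a p"
    unfolding qpoch_inf_def by (rule convergent_prod_LIMSEQ[OF convergent_prod_qpoch[OF assms]])
  then have "(\<lambda>n. qpoch a p (Suc n)) \<longlonglongrightarrow> qpoch_inf a p"
    by (simp add: qpoch_def lessThan_Suc_atMost)
  then show ?thesis
    by (rule LIMSEQ_imp_Suc)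
qed

lemma norm_qpoch_le:
  assumes "norm p < 1"
  shows "norm (qpoch a p n - 1) \<le> exp (norm a / (1 - norm p)) - 1"
    and "norm (qpoch a p n) \<le> exp (norm a / (1 - norm p))"
proof -
  have "(\<Sum>j<n. norm a * norm p ^ j) = norm a * (\<Sum>j<n. norm p ^ j)"
    by (simp add: sum_distrib_left)
  also have "\<dots> \<le> norm a * (\<Sum>j. norm p ^ j)"
    using assms by (intro mult_left_mono sum_le_suminf summable_geometric) auto
  also have "\<dots> = norm a / (1 - norm p)"
    using assms by (simp add: suminf_geometric)
  finally have geom: "(\<Sum>j<n. norm a * norm p ^ j) \<le> norm a / (1 - norm p)" .
  have "norm (qpoch a p n - 1) \<le> (\<Prod>j<n. 1 + norm (- a * p ^ j)) - 1"
    unfolding qpoch_def using norm_prod_minus1_le_prod_minus1[of "\<lambda>j. - a * p ^ j" "{..<n}"]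
    by simp
  also have "(\<Prod>j<n. 1 + norm (- a * p ^ j)) \<le> exp (\<Sum>j<n. norm a * norm p ^ j)"
    by (rule order_trans[OF _ prod_le_exp_sum]) (auto simp: norm_mult norm_power)
  also have "\<dots> \<le> exp (norm a / (1 - norm p))"
    using geom by simp
  finally show diff: "norm (qpoch a p n - 1) \<le> exp (norm a / (1 - norm p)) - 1"
    by simp
  show "norm (qpoch a p n) \<le> exp (norm a / (1 - norm p))"
    using norm_triangle_ineq[of "qpoch a p n - 1" 1] diff by simp
qed

lemma norm_qpoch_inf_le:
  assumes "norm p < 1"
  shows "norm (qpoch_inf a p - 1) \<le> exp (norm a / (1 - norm p)) - 1"
    and "norm (qpoch_inf a p) \<le> exp (norm a / (1 - norm p))"
proof -
  have lim: "(\<lambda>n. qpoch a p n) \<longlonglongrightarrow> qpoch_inf a p"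
    by (rule qpoch_LIMSEQ[OF assms])
  show "norm (qpoch_inf a p - 1) \<le> exp (norm a / (1 - norm p)) - 1"
    by (rule tendsto_le[OF _ tendsto_const tendsto_norm[OF tendsto_diff[OF lim tendsto_const]]])
       (use norm_qpoch_le[OF assms] in auto)
  show "norm (qpoch_inf a p) \<le> exp (norm a / (1 - norm p))"
    by (rule tendsto_le[OF _ tendsto_const tendsto_norm[OF lim]])
       (use norm_qpoch_le[OF assms] in auto)
qed

lemma exp_neg_div_le_one_minus:
  fixes u r :: real
  assumes "0 \<le> u" "u \<le> r" "r < 1"
  shows "exp (- u / (1 - r)) \<le> 1 - u"
proof -
  have "1 / (1 - u) = 1 + u / (1 - u)"
    using assms by (simp add: field_simps)
  also have "\<dots> \<le> exp (u / (1 - u))"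
    by (rule exp_ge_add_one_self)
  finally have "exp (- (u / (1 - u))) \<le> 1 - u"
    using assms by (simp add: exp_minus field_simps)
  moreover have "u / (1 - u) \<le> u / (1 - r)"
    using assms by (intro divide_left_mono) auto
  then have "exp (- u / (1 - r)) \<le> exp (- (u / (1 - u)))"
    by simp
  ultimately show ?thesis
    by linarith
qed

lemma norm_qpoch_self_ge:
  assumes "norm p < 1"
  shows "exp (- norm p / (1 - norm p)\<^sup>2) \<le> norm (qpoch p p k)"
proof -
  define r where "r = norm p"
  have r: "0 \<le> r" "r < 1"
    using assms by (auto simp: r_def)
  have "(\<Sum>j<k. r ^ Suc j) = r * (\<Sum>j<k. r ^ j)"
    by (simp add: sum_distrib_left)
  also have "\<dots> \<le> r * (\<Sum>j. r ^ j)"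
    using r by (intro mult_left_mono sum_le_suminf summable_geometric) auto
  also have "\<dots> = r / (1 - r)"
    using r by (simp add: suminf_geometric)
  finally have "(\<Sum>j<k. r ^ Suc j) / (1 - r) \<le> r / (1 - r) / (1 - r)"
    using r by (intro divide_right_mono) auto
  then have "exp (- r / (1 - r)\<^sup>2) \<le> (\<Prod>j<k. exp (- (r ^ Suc j) / (1 - r)))"
    by (simp add: exp_sum[symmetric] sum_negf sum_divide_distrib power2_eq_square)
  also have "\<dots> \<le> (\<Prod>j<k. 1 - r ^ Suc j)"
  proof (rule prod_mono)
    fix j
    have "r ^ Suc j \<le> r"
      using r by (simp add: power_le_one mult_left_le)
    then have "exp (- (r ^ Suc j) / (1 - r)) \<le> 1 - r ^ Suc j"
      using r by (intro exp_neg_div_le_one_minus) auto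
    then show "0 \<le> exp (- (r ^ Suc j) / (1 - r)) \<and> exp (- (r ^ Suc j) / (1 - r)) \<le> 1 - r ^ Suc j"
      by simp
  qed
  also have "\<dots> \<le> (\<Prod>j<k. norm (1 - p * p ^ j))"
  proof (rule prod_mono)
    fix j
    have "r ^ Suc j \<le> 1"
      using r by (intro power_le_one) auto
    then show "0 \<le> 1 - r ^ Suc j \<and> 1 - r ^ Suc j \<le> norm (1 - p * p ^ j)"
      using norm_triangle_ineq3[of 1 "p * p ^ j"] by (simp add: norm_mult norm_power r_def)
  qed
  also have "\<dots> = norm (qpoch p p k)"
    by (simp add: qpoch_def prod_norm)
  finally show ?thesis
    by (simp add: r_def)
qed

lemma qpoch_self_nonzero:
  assumes "norm p < 1"
  shows "qpoch p p k \<noteq> 0"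
  using norm_qpoch_self_ge[OF assms, of k] by (smt (verit) exp_gt_zero norm_zero)

lemma norm_mult_power_less_one:
  fixes a p :: "'a::real_normed_div_algebra"
  assumes "norm a < 1" "norm p \<le> 1"
  shows "norm (a * p ^ k) < 1"
proof -
  have "norm a * norm p ^ k \<le> norm a"
    using assms by (simp add: mult_left_le power_le_one)
  then show ?thesis
    using assms(1) by (simp add: norm_mult norm_power)
qed

lemma qpoch_inf_nonzero:
  assumes "norm p < 1" "norm a < 1"
  shows "qpoch_inf a p \<noteq> 0"
  unfolding qpoch_inf_def
proof (rule prodinf_nonzero[OF convergent_prod_qpoch[OF assms(1)]])
  fix j
  have "norm (a * p ^ j) < 1"
    using assms by (intro norm_mult_power_less_one) auto
  then show "1 - a * p ^ j \<noteq> 0"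
    by auto
qed

lemma qpoch_inf_tendsto_one:
  assumes p: "norm p < 1" and a: "a \<longlonglongrightarrow> 0"
  shows "(\<lambda>n. qpoch_inf (a n) p) \<longlonglongrightarrow> 1"
proof (rule LIM_zero_cancel, rule Lim_null_comparison)
  show "\<forall>\<^sub>F n in sequentially. norm (qpoch_inf (a n) p - 1) \<le> exp (norm (a n) / (1 - norm p)) - 1"
    by (intro always_eventually allI norm_qpoch_inf_le(1)[OF p])
  have "(\<lambda>n. exp (norm (a n) / (1 - norm p)) - 1) \<longlonglongrightarrow> exp (0 / (1 - norm p)) - 1"
    by (intro tendsto_intros tendsto_norm_zero[OF a]) (use p in auto)
  then show "(\<lambda>n. exp (norm (a n) / (1 - norm p)) - 1) \<longlonglongrightarrow> 0"
    by simp
qed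

section \<open>The reversed polynomials and their recurrence\<close>

fun recur_pair :: "(nat \<Rightarrow> 'a::comm_ring_1) \<Rightarrow> (nat \<Rightarrow> 'a) \<Rightarrow> 'a \<Rightarrow> nat \<Rightarrow> 'a \<times> 'a" where
  "recur_pair c d x 0 = (0, 1)"
| "recur_pair c d x (Suc k) = (snd (recur_pair c d x k),
      (1 + c k * x) * snd (recur_pair c d x k) + d k * x\<^sup>2 * fst (recur_pair c d x k))"

definition rev_eval :: "nat \<Rightarrow> 'a::comm_ring_1 poly \<Rightarrow> 'a \<Rightarrow> 'a" where
  "rev_eval n P x = (\<Sum>k\<le>n. coeff P k * x ^ (n - k))"

lemma rev_eval_Suc:
  assumes "degree P \<le> n"
  shows "rev_eval (Suc n) P x = x * rev_eval n P x"
proof -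
  have "rev_eval (Suc n) P x = (\<Sum>k\<le>n. coeff P k * x ^ (Suc n - k)) + coeff P (Suc n)"
    unfolding rev_eval_def by simp
  also have "coeff P (Suc n) = 0"
    using assms by (simp add: coeff_eq_0)
  also have "(\<Sum>k\<le>n. coeff P k * x ^ (Suc n - k)) = (\<Sum>k\<le>n. x * (coeff P k * x ^ (n - k)))"
    by (intro sum.cong refl) (simp add: Suc_diff_le)
  finally show ?thesis
    by (simp add: rev_eval_def sum_distrib_left)
qed

lemma rev_eval_pCons_0: "rev_eval (Suc n) (pCons 0 P) x = rev_eval n P x"
  unfolding rev_eval_def by (subst sum.atMost_Suc_shift) simp

lemma rev_eval_add: "rev_eval n (P + Q) x = rev_eval n P x + rev_eval n Q x"
  unfolding rev_eval_def by (simp add: distrib_right sum.distrib)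

lemma rev_eval_smult: "rev_eval n (smult a P) x = a * rev_eval n P x"
  unfolding rev_eval_def by (simp add: sum_distrib_left mult.assoc)

lemma bpair_rev_eval:
  fixes p \<alpha> \<beta> :: real
  defines "c \<equiv> \<lambda>k. complex_of_real (bcoef_c p \<alpha> \<beta> k)" and "d \<equiv> \<lambda>k. complex_of_real (bcoef_d p \<alpha> \<beta> k)"
  shows "degree (fst (bpair p \<alpha> \<beta> n)) \<le> n \<and> degree (snd (bpair p \<alpha> \<beta> n)) \<le> n \<and>
    rev_eval n (snd (bpair p \<alpha> \<beta> n)) x = snd (recur_pair c d x n) \<and>
    rev_eval n (fst (bpair p \<alpha> \<beta> n)) x = x * fst (recur_pair c d x n)"
proof (induction n)
  case 0
  then show ?case
    by (simp add: rev_eval_def)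
next
  case (Suc n)
  obtain b' b where b: "bpair p \<alpha> \<beta> n = (b', b)"
    by fastforce
  have IH: "degree b' \<le> n" "degree b \<le> n" "rev_eval n b x = snd (recur_pair c d x n)"
    "rev_eval n b' x = x * fst (recur_pair c d x n)"
    using Suc.IH b by auto
  have next_pair: "bpair p \<alpha> \<beta> (Suc n) = (b, [:c n, 1:] * b + smult (d n) b')"
    using b by (simp add: c_def d_def)
  have "degree ([:c n, 1:] * b) \<le> Suc n"
    using IH degree_mult_le[of "[:c n, 1:]" b] by simp
  moreover have "degree (smult (d n) b') \<le> Suc n"
    using IH degree_smult_le[of "d n" b'] by linarith
  ultimately have deg: "degree ([:c n, 1:] * b + smult (d n) b') \<le> Suc n"
    by (rule degree_add_le)
  have "[:c n, 1:] * b = smult (c n) b + pCons 0 b"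
    by (simp add: mult_poly_add_left pCons_one)
  then have "rev_eval (Suc n) ([:c n, 1:] * b + smult (d n) b') x
      = c n * (x * rev_eval n b x) + rev_eval n b x + d n * (x * rev_eval n b' x)"
    using IH by (simp add: rev_eval_add rev_eval_smult rev_eval_pCons_0 rev_eval_Suc)
  also have "\<dots> = snd (recur_pair c d x (Suc n))"
    using IH by (simp add: algebra_simps power2_eq_square)
  finally show ?case
    using next_pair deg IH by (simp add: rev_eval_Suc)
qed

lemma brev_eq_recur_pair:
  "brev p \<alpha> \<beta> n x = snd (recur_pair (\<lambda>k. of_real (bcoef_c p \<alpha> \<beta> k)) (\<lambda>k. of_real (bcoef_d p \<alpha> \<beta> k)) x n)"
  using bpair_rev_eval[of p \<alpha> \<beta> n x] by (simp add: brev_def bpoly_def rev_eval_def)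

lemma recur_pair_conservation:
  assumes rec: "\<And>n. F n = (1 + c n * x) * F (Suc n) + d (Suc n) * x\<^sup>2 * F (Suc (Suc n))"
  shows "F 0 = snd (recur_pair c d x n) * F n + d n * x\<^sup>2 * fst (recur_pair c d x n) * F (Suc n)"
proof (induction n)
  case 0
  show ?case
    by simp
next
  case (Suc n)
  have "snd (recur_pair c d x (Suc n)) * F (Suc n)
        + d (Suc n) * x\<^sup>2 * fst (recur_pair c d x (Suc n)) * F (Suc (Suc n))
      = snd (recur_pair c d x n) * ((1 + c n * x) * F (Suc n) + d (Suc n) * x\<^sup>2 * F (Suc (Suc n)))
        + d n * x\<^sup>2 * fst (recur_pair c d x n) * F (Suc n)"
    by (simp add: algebra_simps)
  also have "\<dots> = snd (recur_pair c d x n) * F n + d n * x\<^sup>2 * fst (recur_pair c d x n) * F (Suc n)"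
    by (simp only: rec[of n, symmetric])
  finally show ?case
    using Suc.IH by simp
qed

lemma norm_recur_pair_le_prod:
  fixes c d :: "nat \<Rightarrow> complex" and R :: real
  assumes x: "norm x \<le> R"
  shows "norm (fst (recur_pair c d x n)) \<le> (\<Prod>k<n. 1 + (norm (c k) * R + norm (d k) * R\<^sup>2))
    \<and> norm (snd (recur_pair c d x n)) \<le> (\<Prod>k<n. 1 + (norm (c k) * R + norm (d k) * R\<^sup>2))"
proof (induction n)
  case 0
  show ?case
    by simp
next
  case (Suc n)
  define a where "a k = norm (c k) * R + norm (d k) * R\<^sup>2" for k
  define P where "P = (\<Prod>k<n. 1 + a k)"
  define f where "f = fst (recur_pair c d x n)"
  define s where "s = snd (recur_pair c d x n)"
  have R: "0 \<le> R"
    using x norm_ge_zero order_trans by blast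
  then have a: "0 \<le> a n" and P: "1 \<le> P"
    unfolding P_def a_def by (auto intro!: prod_ge_1)
  have IH: "norm f \<le> P" "norm s \<le> P"
    using Suc.IH by (auto simp: f_def s_def P_def a_def)
  have "norm (1 + c n * x) \<le> 1 + norm (c n) * R"
    using norm_triangle_ineq[of 1 "c n * x"] x
    by (simp add: norm_mult) (meson add_left_mono mult_left_mono norm_ge_zero order_trans)
  then have "norm ((1 + c n * x) * s) \<le> (1 + norm (c n) * R) * P"
    unfolding norm_mult using IH R by (intro mult_mono) auto
  moreover have "norm (d n * x\<^sup>2 * f) \<le> norm (d n) * R\<^sup>2 * P"
    unfolding norm_mult norm_power using x IH R by (intro mult_mono power_mono) auto
  ultimately have "norm ((1 + c n * x) * s + d n * x\<^sup>2 * f) \<le> P * (1 + a n)"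
    using norm_triangle_ineq[of "(1 + c n * x) * s" "d n * x\<^sup>2 * f"]
    by (simp add: a_def algebra_simps)
  moreover have "norm s \<le> P * (1 + a n)"
    using IH P a by (smt (verit) mult_le_cancel_left1)
  ultimately show ?case
    by (simp add: f_def s_def P_def a_def)
qed

lemma norm_recur_pair_le:
  fixes c d :: "nat \<Rightarrow> complex" and R :: real
  defines "a \<equiv> \<lambda>k. norm (c k) * R + norm (d k) * R\<^sup>2"
  assumes x: "norm x \<le> R" and a: "summable a"
  shows "norm (fst (recur_pair c d x n)) \<le> exp (suminf a)"
    and "norm (snd (recur_pair c d x n)) \<le> exp (suminf a)"
proof -
  have "0 \<le> R"
    using x norm_ge_zero order_trans by blast
  then have a0: "0 \<le> a k" for k
    unfolding a_def by simp
  have "(\<Prod>k<n. 1 + a k) \<le> exp (\<Sum>k<n. a k)"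
    by (rule prod_le_exp_sum) (use a0 in auto)
  also have "\<dots> \<le> exp (suminf a)"
    using sum_le_suminf[OF a, of "{..<n}"] a0 by simp
  finally show "norm (fst (recur_pair c d x n)) \<le> exp (suminf a)"
    and "norm (snd (recur_pair c d x n)) \<le> exp (suminf a)"
    using norm_recur_pair_le_prod[OF x, of c d n] unfolding a_def by auto
qed

section \<open>The recurrence coefficients\<close>

lemma powr_lt_one:
  fixes p e :: real
  assumes "0 < p" "p < 1" "0 < e"
  shows "p powr e < 1"
  using powr_less_mono2[of e p 1] assms by simp

lemma powr_add_nat:
  fixes p :: real
  assumes "0 < p" "x = u + real n"
  shows "p powr x = p powr u * p ^ n"
  using assms by (simp add: powr_add powr_realpow)

lemma powr_add_add_nat:
  fixes p :: real
  assumes "0 < p" "x = u + v + real n"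
  shows "p powr x = p powr u * p powr v * p ^ n"
  using assms by (simp add: powr_add powr_realpow)

lemma bcoef_c_shift: "bcoef_c p (\<alpha> + real n) (\<beta> + real n) k = bcoef_c p \<alpha> \<beta> (n + k)"
  by (simp add: bcoef_c_def algebra_simps)

lemma bcoef_d_shift: "bcoef_d p (\<alpha> + real n) (\<beta> + real n) k = bcoef_d p \<alpha> \<beta> (n + k)"
  by (simp add: bcoef_d_def algebra_simps)

lemma summable_abs_bcoef_c:
  assumes p: "0 < p" "p < 1" and \<alpha>\<beta>: "\<alpha> > -1" "\<beta> > -1"
  shows "summable (\<lambda>k. \<bar>bcoef_c p \<alpha> \<beta> k\<bar>)"
proof (rule summable_comparison_test')
  define \<delta> where "\<delta> = 1 - p powr (\<alpha> + \<beta> + 2)"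
  have \<delta>: "0 < \<delta>"
    using powr_lt_one[OF p, of "\<alpha> + \<beta> + 2"] \<alpha>\<beta> by (simp add: \<delta>_def)
  define K where "K = \<bar>1 - p powr (\<beta> - \<alpha>)\<bar> * (2 / (\<delta> * \<delta>)) * p powr (\<alpha> + 3/2)"
  show "summable (\<lambda>k. K * p ^ k)"
    using p by (intro summable_mult summable_geometric) auto
  fix k
  define X where "X = p powr (\<alpha> + \<beta> + 2 + 2 * real k)"
  define Y where "Y = p powr (\<alpha> + \<beta> + 4 + 2 * real k)"
  define Z where "Z = p powr (\<alpha> + \<beta> + 3 + 2 * real k)"
  define F where "F = (1 + Z) / ((1 - X) * (1 - Y))"
  have X: "\<delta> \<le> 1 - X" and Y: "\<delta> \<le> 1 - Y"
    unfolding X_def Y_def \<delta>_def using p by (auto intro!: powr_mono')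
  have Z: "0 \<le> Z" "Z \<le> 1"
    unfolding Z_def using p \<alpha>\<beta> by (auto intro: powr_le1)
  have F: "0 \<le> F" "F \<le> 2 / (\<delta> * \<delta>)"
    unfolding F_def using \<delta> X Y Z by (auto intro!: divide_nonneg_pos mult_pos_pos frac_le mult_mono)
  have "bcoef_c p \<alpha> \<beta> k = (1 - p powr (\<beta> - \<alpha>)) * F * (p powr (\<alpha> + 3/2) * p ^ k)"
    unfolding bcoef_c_def F_def X_def Y_def Z_def
    using powr_add_nat[OF p(1), of "\<alpha> + 3/2 + real k" "\<alpha> + 3/2" k] by simp
  then have "\<bar>bcoef_c p \<alpha> \<beta> k\<bar> = \<bar>1 - p powr (\<beta> - \<alpha>)\<bar> * F * (p powr (\<alpha> + 3/2) * p ^ k)"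
    using F p by (simp add: abs_mult)
  also have "\<dots> \<le> \<bar>1 - p powr (\<beta> - \<alpha>)\<bar> * (2 / (\<delta> * \<delta>)) * (p powr (\<alpha> + 3/2) * p ^ k)"
    using F p by (intro mult_right_mono mult_left_mono) auto
  finally show "norm \<bar>bcoef_c p \<alpha> \<beta> k\<bar> \<le> K * p ^ k"
    by (simp add: K_def mult_ac)
qed

lemma summable_abs_bcoef_d:
  assumes p: "0 < p" "p < 1" and \<alpha>\<beta>: "\<alpha> > -1" "\<beta> > -1"
  shows "summable (\<lambda>k. \<bar>bcoef_d p \<alpha> \<beta> k\<bar>)"
proof (rule summable_comparison_test'[where N = 1])
  define e where "e = \<alpha> + \<beta> + 2"
  define \<delta> where "\<delta> = 1 - p powr e"
  have \<delta>: "0 < \<delta>"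
    using powr_lt_one[OF p, of e] \<alpha>\<beta> by (simp add: \<delta>_def e_def)
  define K where "K = p powr e / (\<delta> * \<delta>\<^sup>2 * \<delta>)"
  show "summable (\<lambda>k. K * p ^ k)"
    using p by (intro summable_mult summable_geometric) auto
  fix k :: nat
  assume "1 \<le> k"
  define N where "N = (1 - p powr (2 * \<alpha> + 2 + 2 * real k)) * (1 - p powr (2 * \<beta> + 2 + 2 * real k))"
  define Y where "Y = p powr (2 * real k + \<alpha> + \<beta> + 2)"
  define E where "E = (1 - p powr (\<alpha> + \<beta> + 1 + 2 * real k)) * (1 - p powr (\<alpha> + \<beta> + 2 + 2 * real k))\<^sup>2
    * (1 - p powr (\<alpha> + \<beta> + 3 + 2 * real k))"
  have "p powr (2 * \<alpha> + 2 + 2 * real k) \<le> 1" "p powr (2 * \<beta> + 2 + 2 * real k) \<le> 1"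
    using p \<alpha>\<beta> by (auto intro!: powr_le1)
  then have N: "0 \<le> N" "N \<le> 1"
    unfolding N_def by (auto intro!: mult_le_one)
  have "\<delta> \<le> 1 - p powr (\<alpha> + \<beta> + 1 + 2 * real k)" "\<delta> \<le> 1 - p powr (\<alpha> + \<beta> + 2 + 2 * real k)"
    "\<delta> \<le> 1 - p powr (\<alpha> + \<beta> + 3 + 2 * real k)"
    unfolding \<delta>_def e_def using p \<open>1 \<le> k\<close> by (auto intro!: powr_mono')
  then have E: "\<delta> * \<delta>\<^sup>2 * \<delta> \<le> E"
    unfolding E_def using \<delta> by (intro mult_mono power_mono) auto
  moreover have "0 < \<delta> * \<delta>\<^sup>2 * \<delta>"
    using \<delta> by simp
  ultimately have E0: "0 < E"
    by linarith
  have "Y = p powr e * p ^ (2 * k)"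
    unfolding Y_def e_def
    using powr_add_nat[OF p(1), of "2 * real k + \<alpha> + \<beta> + 2" "\<alpha> + \<beta> + 2" "2 * k"] by simp
  then have Y: "0 \<le> Y" "Y \<le> p powr e * p ^ k"
    using p by (auto intro!: mult_left_mono power_decreasing)
  have "bcoef_d p \<alpha> \<beta> k = N * Y / E"
    unfolding bcoef_d_def N_def Y_def E_def ..
  moreover have "0 \<le> N * Y / E"
    using N Y E0 by (intro divide_nonneg_nonneg mult_nonneg_nonneg) auto
  ultimately have "\<bar>bcoef_d p \<alpha> \<beta> k\<bar> = N * Y / E"
    by (metis abs_of_nonneg)
  also have "\<dots> \<le> Y / (\<delta> * \<delta>\<^sup>2 * \<delta>)"
    using N Y E \<delta> by (intro frac_le mult_left_le_one_le) auto
  also have "\<dots> \<le> K * p ^ k"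
    unfolding K_def using Y \<delta> by (simp add: divide_right_mono)
  finally show "norm \<bar>bcoef_d p \<alpha> \<beta> k\<bar> \<le> K * p ^ k"
    by simp
qed

section \<open>The basic hypergeometric series\<close>

definition htail :: "complex \<Rightarrow> complex \<Rightarrow> complex \<Rightarrow> nat \<Rightarrow> complex" where
  "htail A z p k = qpoch_inf (- (A * z * p ^ k)) p"

definition hterm :: "complex \<Rightarrow> complex \<Rightarrow> complex \<Rightarrow> complex \<Rightarrow> nat \<Rightarrow> complex" where
  "hterm A B z p k = qpoch A p k * qpoch z p k / qpoch p p k * B ^ k * htail A z p k"

definition hseries :: "complex \<Rightarrow> complex \<Rightarrow> complex \<Rightarrow> complex \<Rightarrow> complex" where
  "hseries A B z p = (\<Sum>k. hterm A B z p k)"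

lemma htail_Suc:
  assumes "norm p < 1"
  shows "htail A z p k = (1 + A * z * p ^ k) * htail A z p (Suc k)"
  unfolding htail_def using qpoch_inf_shift[OF assms, of "- (A * z * p ^ k)"]
  by (simp add: algebra_simps)

lemma htail_mult_p: "htail (A * p) z p k = htail A z p (Suc k)"
  unfolding htail_def by (simp add: mult_ac)

lemma htail_mult_p2: "htail (A * p\<^sup>2) z p k = htail A z p (Suc (Suc k))"
  unfolding htail_def by (simp add: mult_ac power2_eq_square)

definition hbound :: "real \<Rightarrow> real \<Rightarrow> real" where
  "hbound r s = exp (1 / (1 - s)) * exp (r / (1 - s)) * exp (s / (1 - s)\<^sup>2) * exp (r / (1 - s))"

lemma norm_hterm_factor_le:
  assumes p: "norm p < 1" and A: "norm A \<le> 1" and z: "norm z \<le> r"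
  shows "norm (qpoch A p i * qpoch z p j / qpoch p p k * htail A z p l) \<le> hbound r (norm p)"
proof -
  have p0: "0 < 1 - norm p"
    using p by simp
  have r: "0 \<le> r"
    using z norm_ge_zero order_trans by blast
  have "norm (qpoch A p i) \<le> exp (norm A / (1 - norm p))"
    by (rule norm_qpoch_le(2)[OF p])
  also have "\<dots> \<le> exp (1 / (1 - norm p))"
    using A p0 by (simp add: divide_right_mono)
  finally have b1: "norm (qpoch A p i) \<le> exp (1 / (1 - norm p))" .
  have "norm (qpoch z p j) \<le> exp (norm z / (1 - norm p))"
    by (rule norm_qpoch_le(2)[OF p])
  also have "\<dots> \<le> exp (r / (1 - norm p))"
    using z p0 by (simp add: divide_right_mono)
  finally have b2: "norm (qpoch z p j) \<le> exp (r / (1 - norm p))" .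
  have lower: "exp (- norm p / (1 - norm p)\<^sup>2) \<le> norm (qpoch p p k)"
    by (rule norm_qpoch_self_ge[OF p])
  moreover have "0 < norm (qpoch p p k)"
    using qpoch_self_nonzero[OF p] by simp
  ultimately have "1 / norm (qpoch p p k) \<le> 1 / exp (- norm p / (1 - norm p)\<^sup>2)"
    by (intro divide_left_mono) auto
  then have b3: "1 / norm (qpoch p p k) \<le> exp (norm p / (1 - norm p)\<^sup>2)"
    by (simp add: exp_minus field_simps)
  have "norm (A * z * p ^ l) \<le> 1 * r * 1"
    unfolding norm_mult norm_power using A z p r by (intro mult_mono power_le_one) auto
  then have "norm (htail A z p l) \<le> exp (r / (1 - norm p))"
    unfolding htail_def using norm_qpoch_inf_le(2)[OF p, of "- (A * z * p ^ l)"] p0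
    by (smt (verit) divide_right_mono exp_le_cancel_iff norm_minus_cancel)
  with b1 b2 b3 show ?thesis
    unfolding hbound_def norm_mult norm_divide
    by (simp add: divide_inverse) (intro mult_mono; simp add: field_simps)
qed

lemma norm_hterm_le:
  assumes "norm p < 1" "norm A \<le> 1" "norm z \<le> r"
  shows "norm (hterm A B z p k) \<le> hbound r (norm p) * norm B ^ k"
proof -
  have "norm (hterm A B z p k)
      = norm (qpoch A p k * qpoch z p k / qpoch p p k * htail A z p k) * norm B ^ k"
    by (simp add: hterm_def norm_mult norm_divide norm_power)
  then show ?thesis
    using norm_hterm_factor_le[OF assms, of k k k k] by (simp add: mult_right_mono)
qed

lemma summable_hterm:
  assumes "norm p < 1" "norm A \<le> 1" "norm B < 1"
  shows "summable (hterm A B z p)"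
proof (rule summable_comparison_test')
  show "summable (\<lambda>k. hbound (norm z) (norm p) * norm B ^ k)"
    using assms by (intro summable_mult summable_geometric) auto
  show "norm (hterm A B z p k) \<le> hbound (norm z) (norm p) * norm B ^ k" for k
    using assms by (intro norm_hterm_le) auto
qed

lemma norm_hseries_diff_one_le:
  assumes p: "norm p < 1" and A: "norm A \<le> 1" and B: "norm B < 1" and z: "norm z \<le> r"
  shows "norm (hseries A B z p - 1)
    \<le> (exp (norm A * r / (1 - norm p)) - 1) + hbound r (norm p) * (norm B / (1 - norm B))"
proof -
  define K where "K = hbound r (norm p)"
  have bound: "norm (hterm A B z p (Suc k)) \<le> K * norm B ^ Suc k" for k
    unfolding K_def by (rule norm_hterm_le[OF p A z])
  have "(\<lambda>k. (K * norm B) * norm B ^ k) sums ((K * norm B) * (1 / (1 - norm B)))"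
    using B by (intro sums_mult geometric_sums) simp
  then have geom: "(\<lambda>k. K * norm B ^ Suc k) sums (K * (norm B / (1 - norm B)))"
    by (simp add: mult_ac)
  have tail_summable: "summable (\<lambda>k. norm (hterm A B z p (Suc k)))"
    by (rule summable_comparison_test'[OF sums_summable[OF geom]]) (use bound in auto)
  have "norm (\<Sum>k. hterm A B z p (Suc k)) \<le> (\<Sum>k. norm (hterm A B z p (Suc k)))"
    by (rule summable_norm[OF tail_summable])
  also have "\<dots> \<le> (\<Sum>k. K * norm B ^ Suc k)"
    by (rule suminf_le[OF bound tail_summable sums_summable[OF geom]])
  also have "\<dots> = K * (norm B / (1 - norm B))"
    using geom by (rule sums_unique[symmetric])
  finally have tail: "norm (\<Sum>k. hterm A B z p (Suc k)) \<le> K * (norm B / (1 - norm B))" .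
  have "norm (A * z) \<le> norm A * r"
    using z by (simp add: norm_mult mult_left_mono)
  then have "exp (norm (- (A * z)) / (1 - norm p)) \<le> exp (norm A * r / (1 - norm p))"
    using p by (simp add: divide_right_mono)
  moreover have "norm (hterm A B z p 0 - 1) \<le> exp (norm (- (A * z)) / (1 - norm p)) - 1"
    using norm_qpoch_inf_le(1)[OF p, of "- (A * z)"] by (simp add: hterm_def htail_def)
  ultimately have head: "norm (hterm A B z p 0 - 1) \<le> exp (norm A * r / (1 - norm p)) - 1"
    by linarith
  have "hseries A B z p - 1 = (hterm A B z p 0 - 1) + (\<Sum>k. hterm A B z p (Suc k))"
    unfolding hseries_def using suminf_split_head[OF summable_hterm[OF p A B]] by simp
  then have "norm (hseries A B z p - 1)
      \<le> norm (hterm A B z p 0 - 1) + norm (\<Sum>k. hterm A B z p (Suc k))"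
    by (simp only: norm_triangle_ineq)
  then show ?thesis
    using head tail unfolding K_def by linarith
qed

section \<open>A contiguous relation for the series\<close>

text \<open>For \<open>A = p powr (\<alpha> + 1)\<close> and \<open>B = p powr (\<beta> + 1)\<close> the first recurrence coefficients
  are \<open>c 0 = p powr (1/2) * contig_c A B p\<close> and \<open>d 1 = contig_d A B p\<close>.\<close>

definition contig_c :: "complex \<Rightarrow> complex \<Rightarrow> complex \<Rightarrow> complex" where
  "contig_c A B p = (A - B) * (1 + A*B*p) / ((1 - A*B) * (1 - A*B*p\<^sup>2))"

definition contig_d :: "complex \<Rightarrow> complex \<Rightarrow> complex \<Rightarrow> complex" where
  "contig_d A B p = (1 - A\<^sup>2*p\<^sup>2) * (1 - B\<^sup>2*p\<^sup>2) * A*B*p\<^sup>2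
    / ((1 - A*B*p) * (1 - A*B*p\<^sup>2)\<^sup>2 * (1 - A*B*p^3))"

definition shift_ratio1 :: "complex \<Rightarrow> complex \<Rightarrow> complex \<Rightarrow> complex" where
  "shift_ratio1 A B p = (1 - A*B) * (1 - A*B*p) / (1 - B)"

definition shift_ratio2 :: "complex \<Rightarrow> complex \<Rightarrow> complex \<Rightarrow> complex" where
  "shift_ratio2 A B p = (1 - A*B) * (1 - A*B*p) * (1 - A*B*p\<^sup>2) * (1 - A*B*p^3) / ((1 - B) * (1 - B*p))"

definition gap_num :: "complex \<Rightarrow> complex \<Rightarrow> complex \<Rightarrow> complex \<Rightarrow> complex \<Rightarrow> complex" where
  "gap_num A B p z P = p*(1 - A*B*p\<^sup>2)*(-(1 - A) + A*(1 - A*B)*P)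
     + z*P*((1 + A*B*p)*(1 - A + A*p - A*B*p) - A*(1 + A*p)*(1 - A*B)*P)"

definition gap_coeff :: "complex \<Rightarrow> complex \<Rightarrow> complex \<Rightarrow> complex \<Rightarrow> complex \<Rightarrow> complex" where
  "gap_coeff A B p z P = gap_num A B p z P / (p * (1 - A*B*p\<^sup>2) * (1 - A) * (1 - B))"

text \<open>A telescoping certificate: termwise, the contiguous relation holds up to
  \<open>hgap (k+1) - hgap k\<close>.\<close>

fun hgap :: "complex \<Rightarrow> complex \<Rightarrow> complex \<Rightarrow> complex \<Rightarrow> nat \<Rightarrow> complex" where
  "hgap A B z p 0 = 0"
| "hgap A B z p (Suc m) = qpoch A p (Suc m) * qpoch z p m * B ^ Suc m
    * gap_coeff A B p z (p ^ Suc m) / qpoch p p m * htail A z p (Suc m)"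

lemma contig_denoms_nonzero:
  fixes A B p :: complex
  assumes "norm A < 1" "norm B < 1" "norm p < 1"
  shows "1 - A \<noteq> 0" "1 - A*p \<noteq> 0" "1 - B \<noteq> 0" "1 - B*p \<noteq> 0"
    "1 - A*B \<noteq> 0" "1 - A*B*p \<noteq> 0" "1 - A*B*p\<^sup>2 \<noteq> 0" "1 - A*B*p^3 \<noteq> 0"
proof -
  have small: "1 - X * p ^ k \<noteq> 0" if "norm X < 1" for X k
    using norm_mult_power_less_one[OF that, of p k] assms(3) by auto
  have "norm (A * B) < 1"
    using norm_mult_less[of A 1 B 1] assms by simp
  then show "1 - A \<noteq> 0" "1 - A*p \<noteq> 0" "1 - B \<noteq> 0" "1 - B*p \<noteq> 0"
    "1 - A*B \<noteq> 0" "1 - A*B*p \<noteq> 0" "1 - A*B*p\<^sup>2 \<noteq> 0" "1 - A*B*p^3 \<noteq> 0"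
    using small[of A 0] small[of A 1] small[of B 0] small[of B 1] small[of "A*B" 0]
      small[of "A*B" 1] small[of "A*B" 2] small[of "A*B" 3] assms
    by simp_all
qed

lemma contig_bracket:
  fixes A B p z M :: complex
  assumes nz: "1 - A \<noteq> 0" "1 - A*p \<noteq> 0" "1 - B \<noteq> 0" "1 - B*p \<noteq> 0"
    "1 - A*B \<noteq> 0" "1 - A*B*p \<noteq> 0" "1 - A*B*p\<^sup>2 \<noteq> 0" "1 - A*B*p^3 \<noteq> 0" "p \<noteq> 0"
  shows "B*(1 - z*M)*(1 + A*z*p*M)
     - (1 + contig_c A B p * z) * shift_ratio1 A B p * ((1 - A*p*M)*(1 - z*M)*B*p*M / (1 - A))
     - contig_d A B p * (z\<^sup>2/p) * shift_ratio2 A B p * ((1 - A*p*M)*M\<^sup>2*(1 - p*M) / ((1 - A)*(1 - A*p)))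
   = (1 - A*p*M)*(1 - z*M)*B\<^sup>2 * gap_coeff A B p z (p\<^sup>2*M)
     - B*(1 + A*z*p*M)*(1 - p*M) * gap_coeff A B p z (p*M)"
proof -
  define E where "E = 1 - A*B*p\<^sup>2"
  define N1 where "N1 = ((1 - A*B)*E + (A - B)*(1 + A*B*p)*z)*(1 - A*B*p)"
  define N2 where "N2 = (1 + A*p)*(1 + B*p)*A*B*p*(1 - A*B)"
  have k1: "(1 + contig_c A B p * z) * shift_ratio1 A B p = N1 / (E * (1 - B))"
    using nz unfolding contig_c_def shift_ratio1_def N1_def E_def by (simp add: divide_simps)
  have "1 - A\<^sup>2*p\<^sup>2 = (1 - A*p)*(1 + A*p)" "1 - B\<^sup>2*p\<^sup>2 = (1 - B*p)*(1 + B*p)"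
    by (simp_all add: algebra_simps power2_eq_square)
  then have k2: "contig_d A B p * (z\<^sup>2/p) * shift_ratio2 A B p = z\<^sup>2 * (1 - A*p) * N2 / (E * (1 - B))"
    using nz unfolding contig_d_def shift_ratio2_def N2_def E_def
    by (simp add: divide_simps) (simp add: algebra_simps power2_eq_square power3_eq_cube)
  have cleared: "B*(1 - z*M)*(1 + A*z*p*M) * p * E * (1 - A) * (1 - B)
      - N1 * p * ((1 - A*p*M)*(1 - z*M)*B*p*M) - z\<^sup>2 * N2 * p * ((1 - A*p*M)*M\<^sup>2*(1 - p*M))
    = (1 - A*p*M)*(1 - z*M)*B\<^sup>2 * gap_num A B p z (p\<^sup>2*M)
      - B*(1 + A*z*p*M)*(1 - p*M) * gap_num A B p z (p*M)"
    unfolding gap_num_def N1_def N2_def E_def by (simp add: algebra_simps power2_eq_square power3_eq_cube)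
  \<comment> \<open>the factors are generalised to variables so that clearing denominators stays cheap\<close>
  have divided: "a - n1 / (e*w) * (b/u) - z2 * t * n2 / (e*w) * (c / (u*t))
      = d * (qa / (p*e*u*w)) - f * (qb / (p*e*u*w))"
    if "e \<noteq> 0" "u \<noteq> 0" "w \<noteq> 0" "t \<noteq> 0"
      and "a * p * e * u * w - n1 * p * b - z2 * n2 * p * c = d * qa - f * qb"
    for a b c d f n1 n2 qa qb e u w t z2 :: complex
  proof -
    have "(a - n1 / (e*w) * (b/u) - z2 * t * n2 / (e*w) * (c / (u*t))) * (p*e*u*w)
        = a * p * e * u * w - n1 * p * b - z2 * n2 * p * c"
      using that(1-4) nz(9) by (simp add: field_simps)
    also have "\<dots> = d * qa - f * qb"
      by (rule that(5))
    also have "\<dots> = (d * (qa / (p*e*u*w)) - f * (qb / (p*e*u*w))) * (p*e*u*w)"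
      using that(1-4) nz(9) by (simp add: field_simps)
    finally show ?thesis
      using that(1-4) nz(9) by simp
  qed
  show ?thesis
    unfolding k1 k2 gap_coeff_def E_def[symmetric]
    by (rule divided[OF _ _ _ _ cleared]) (use nz in \<open>simp_all add: E_def\<close>)
qed

lemma contig_bracket_0:
  fixes A B p z :: complex
  assumes "1 - A \<noteq> 0" "1 - B \<noteq> 0" "1 - A*B \<noteq> 0" "1 - A*B*p\<^sup>2 \<noteq> 0" "p \<noteq> 0"
  shows "(1 + A*z) - (1 + contig_c A B p * z) * shift_ratio1 A B p = (1 - A) * B * gap_coeff A B p z p"
  using assms unfolding contig_c_def shift_ratio1_def gap_coeff_def gap_num_def
  by (simp add: divide_simps) (simp add: algebra_simps power2_eq_square)

lemma hterm_contiguous_0: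
  assumes "norm A < 1" "norm B < 1" "norm p < 1" "p \<noteq> 0"
  shows "hterm A B z p 0 - (1 + contig_c A B p * z) * shift_ratio1 A B p * hterm (A*p) (B*p) z p 0
    = hgap A B z p (Suc 0)"
proof -
  note nz = contig_denoms_nonzero[OF assms(1-3)]
  have "hterm A B z p 0 - (1 + contig_c A B p * z) * shift_ratio1 A B p * hterm (A*p) (B*p) z p 0
      = ((1 + A*z) - (1 + contig_c A B p * z) * shift_ratio1 A B p) * htail A z p (Suc 0)"
    using htail_Suc[OF assms(3), of A z 0] by (simp add: hterm_def htail_mult_p algebra_simps)
  also have "\<dots> = (1 - A) * B * gap_coeff A B p z p * htail A z p (Suc 0)"
    using contig_bracket_0[of A B p z] nz assms(4) by simp
  finally show ?thesis
    by (simp add: qpoch_Suc)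
qed

lemma hterm_contiguous_factors:
  fixes A B z p :: complex and m :: nat
  assumes p: "norm p < 1" and nz: "1 - A \<noteq> 0" "1 - A*p \<noteq> 0"
  defines "M \<equiv> p ^ m"
    and "K \<equiv> qpoch A p m * (1 - A * p ^ m) * qpoch z p m * B ^ m * htail A z p (Suc (Suc m))
      / (qpoch p p m * (1 - p * p ^ m))"
  shows "hterm A B z p (Suc m) = K * (B*(1 - z*M)*(1 + A*z*p*M))"
    and "hterm (A*p) (B*p) z p (Suc m) = K * ((1 - A*p*M)*(1 - z*M)*B*p*M / (1 - A))"
    and "hterm (A*p\<^sup>2) (B*p\<^sup>2) z p m = K * ((1 - A*p*M)*M\<^sup>2*(1 - p*M) / ((1 - A)*(1 - A*p)))"
    and "hgap A B z p (Suc (Suc m)) = K * ((1 - A*p*M)*(1 - z*M)*B\<^sup>2 * gap_coeff A B p z (p\<^sup>2*M))"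
    and "hgap A B z p (Suc m) = K * (B*(1 + A*z*p*M)*(1 - p*M) * gap_coeff A B p z (p*M))"
proof -
  define X where "X = qpoch A p m"
  define Y where "Y = qpoch z p m"
  define Z where "Z = qpoch p p m"
  define W where "W = htail A z p (Suc (Suc m))"
  have Z: "Z \<noteq> 0"
    unfolding Z_def by (rule qpoch_self_nonzero[OF p])
  have "norm (p * M) < 1"
    unfolding M_def using p by (intro norm_mult_power_less_one) auto
  then have pM: "1 - p*M \<noteq> 0"
    by auto
  have K: "K = X * (1 - A*M) * Y * B ^ m * W / (Z * (1 - p*M))"
    unfolding K_def X_def Y_def Z_def W_def M_def ..
  have qA1: "qpoch A p (Suc m) = X*(1 - A*M)"
    by (simp add: qpoch_Suc X_def M_def)
  have qA2: "qpoch A p (Suc (Suc m)) = X*(1 - A*M)*(1 - A*p*M)"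
    by (simp add: qpoch_Suc X_def M_def mult_ac)
  have qAp: "qpoch (A*p) p (Suc m) = X*(1 - A*M)*(1 - A*p*M) / (1 - A)"
    using qA2 qpoch_Suc_shift[of A p "Suc m"] nz(1) by (simp add: field_simps)
  have "qpoch (A*p\<^sup>2) p m * (1 - A*p) = qpoch (A*p) p (Suc m)"
    using qpoch_Suc_shift[of "A*p" p m] by (simp add: power2_eq_square mult_ac)
  then have "qpoch (A*p\<^sup>2) p m * (1 - A*p) = X*(1 - A*M)*(1 - A*p*M) / (1 - A)"
    using qAp by simp
  then have qAp2: "qpoch (A*p\<^sup>2) p m = X*(1 - A*M)*(1 - A*p*M) / (1 - A) / (1 - A*p)"
    by (subst nonzero_eq_divide_eq[OF nz(2)])
  have qz1: "qpoch z p (Suc m) = Y*(1 - z*M)" and qp1: "qpoch p p (Suc m) = Z*(1 - p*M)"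
    by (simp_all add: qpoch_Suc Y_def Z_def M_def)
  have w1: "htail A z p (Suc m) = (1 + A*z*p*M) * W"
    using htail_Suc[OF p, of A z "Suc m"] by (simp add: W_def M_def mult_ac)
  have p2m: "(p\<^sup>2) ^ m = M\<^sup>2"
    by (simp add: M_def power_mult[symmetric] mult.commute)
  show "hterm A B z p (Suc m) = K * (B*(1 - z*M)*(1 + A*z*p*M))"
    unfolding K hterm_def using Z pM by (simp add: qA1 qz1 qp1 w1 field_simps)
  show "hterm (A*p) (B*p) z p (Suc m) = K * ((1 - A*p*M)*(1 - z*M)*B*p*M / (1 - A))"
    unfolding K hterm_def using Z pM nz
    by (simp add: qAp qz1 qp1 htail_mult_p W_def[symmetric] M_def[symmetric] field_simps power_mult_distrib)
  have rearrange: "x * c1 * c2 / a1 / a2 * y / z * (b * M\<^sup>2) * w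
      = x * c1 * y * b * w / (z * d) * (c2 * M\<^sup>2 * d / (a1 * a2))"
    if "a1 \<noteq> 0" "a2 \<noteq> 0" "z \<noteq> 0" "d \<noteq> 0" for x c1 c2 a1 a2 y z b w d :: complex
    using that by (simp add: field_simps)
  show "hterm (A*p\<^sup>2) (B*p\<^sup>2) z p m = K * ((1 - A*p*M)*M\<^sup>2*(1 - p*M) / ((1 - A)*(1 - A*p)))"
    unfolding hterm_def qAp2 htail_mult_p2 power_mult_distrib p2m W_def[symmetric] Y_def[symmetric]
      Z_def[symmetric] K
    by (rule rearrange) (use Z pM nz in auto)
  show "hgap A B z p (Suc (Suc m)) = K * ((1 - A*p*M)*(1 - z*M)*B\<^sup>2 * gap_coeff A B p z (p\<^sup>2*M))"
    unfolding K by (simp add: qA2 qz1 qp1 M_def W_def power2_eq_square divide_inverse mult_ac)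
  show "hgap A B z p (Suc m) = K * (B*(1 + A*z*p*M)*(1 - p*M) * gap_coeff A B p z (p*M))"
    unfolding K using pM by (simp add: qA1 w1 M_def X_def Y_def Z_def divide_inverse mult_ac)
qed

lemma hterm_contiguous_Suc:
  assumes "norm A < 1" "norm B < 1" "norm p < 1" "p \<noteq> 0"
  shows "hterm A B z p (Suc m)
      - (1 + contig_c A B p * z) * shift_ratio1 A B p * hterm (A*p) (B*p) z p (Suc m)
      - contig_d A B p * (z\<^sup>2/p) * shift_ratio2 A B p * hterm (A*p\<^sup>2) (B*p\<^sup>2) z p m
    = hgap A B z p (Suc (Suc m)) - hgap A B z p (Suc m)"
proof -
  note nz = contig_denoms_nonzero[OF assms(1-3)]
  have factor_out: "K * b0 - k1 * (K * b1) - k2 * (K * b2) = K * (b0 - k1 * b1 - k2 * b2)"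
    and factor_out': "K * b3 - K * b4 = K * (b3 - b4)"
    for K b0 b1 b2 b3 b4 k1 k2 :: complex
    by (simp_all add: algebra_simps)
  show ?thesis
    unfolding hterm_contiguous_factors[OF assms(3) nz(1,2), of B z m] factor_out factor_out'
      contig_bracket[OF nz assms(4), of z "p ^ m"] ..
qed

lemma hgap_LIMSEQ_zero:
  assumes "norm A < 1" "norm B < 1" "norm p < 1"
  shows "hgap A B z p \<longlonglongrightarrow> 0"
proof -
  define H where "H m = qpoch A p (Suc m) * qpoch z p m / qpoch p p m * htail A z p (Suc m) * B ^ Suc m"
    for m
  have "H \<longlonglongrightarrow> 0"
  proof (rule Lim_null_comparison)
    show "\<forall>\<^sub>F m in sequentially. norm (H m) \<le> hbound (norm z) (norm p) * norm B ^ Suc m"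
    proof (intro always_eventually allI)
      fix m
      have "norm (H m) = norm (qpoch A p (Suc m) * qpoch z p m / qpoch p p m * htail A z p (Suc m))
          * norm B ^ Suc m"
        unfolding H_def norm_mult[of _ "B ^ Suc m"] norm_power ..
      also have "\<dots> \<le> hbound (norm z) (norm p) * norm B ^ Suc m"
        using assms by (intro mult_right_mono norm_hterm_factor_le) auto
      finally show "norm (H m) \<le> hbound (norm z) (norm p) * norm B ^ Suc m" .
    qed
    show "(\<lambda>m. hbound (norm z) (norm p) * norm B ^ Suc m) \<longlonglongrightarrow> 0"
      using assms by (intro tendsto_mult_right_zero LIMSEQ_Suc LIMSEQ_power_zero) auto
  qed
  moreover have "(\<lambda>m. gap_coeff A B p z (p ^ Suc m)) \<longlonglongrightarrow> gap_coeff A B p z 0"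
  proof (rule isCont_tendsto_compose[of _ "gap_coeff A B p z"])
    have "isCont (\<lambda>P. gap_num A B p z P * (1 / (p * (1 - A*B*p\<^sup>2) * (1 - A) * (1 - B)))) 0"
      unfolding gap_num_def by (intro continuous_intros)
    then show "isCont (gap_coeff A B p z) 0"
      by (simp add: gap_coeff_def[abs_def])
    show "(\<lambda>m. p ^ Suc m) \<longlonglongrightarrow> 0"
      using assms by (intro LIMSEQ_Suc LIMSEQ_power_zero) auto
  qed
  ultimately have "(\<lambda>m. H m * gap_coeff A B p z (p ^ Suc m)) \<longlonglongrightarrow> 0 * gap_coeff A B p z 0"
    by (rule tendsto_mult)
  moreover have "hgap A B z p (Suc m) = H m * gap_coeff A B p z (p ^ Suc m)" for m
    by (simp add: H_def)
  ultimately have "(\<lambda>m. hgap A B z p (Suc m)) \<longlonglongrightarrow> 0"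
    by simp
  then show ?thesis
    by (rule LIMSEQ_imp_Suc)
qed

lemma hseries_contiguous:
  assumes A: "norm A < 1" and B: "norm B < 1" and p: "norm p < 1" "p \<noteq> 0"
  shows "hseries A B z p
    = (1 + contig_c A B p * z) * shift_ratio1 A B p * hseries (A*p) (B*p) z p
      + contig_d A B p * (z\<^sup>2/p) * shift_ratio2 A B p * hseries (A*p\<^sup>2) (B*p\<^sup>2) z p"
proof -
  define k1 where "k1 = (1 + contig_c A B p * z) * shift_ratio1 A B p"
  define k2 where "k2 = contig_d A B p * (z\<^sup>2/p) * shift_ratio2 A B p"
  define D where "D k = hterm A B z p k - k1 * hterm (A*p) (B*p) z p k" for k
  have small: "norm (X * p ^ k) < 1" if "norm X < 1" for X k
    using norm_mult_power_less_one[OF that, of p k] p by simp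
  have sums: "hterm X Y z p sums hseries X Y z p" if "norm X < 1" "norm Y < 1" for X Y
    unfolding hseries_def using that p by (intro summable_sums summable_hterm) auto
  have "D sums (hseries A B z p - k1 * hseries (A*p) (B*p) z p)"
    unfolding D_def using small[of A 1] small[of B 1] A B
    by (intro sums_diff sums_mult sums) auto
  then have "(\<lambda>m. D (Suc m)) sums (hseries A B z p - k1 * hseries (A*p) (B*p) z p - D 0)"
    using sums_split_initial_segment[of D _ 1] by simp
  moreover have "(\<lambda>m. D (Suc m)) sums (0 - hgap A B z p (Suc 0) + k2 * hseries (A*p\<^sup>2) (B*p\<^sup>2) z p)"
  proof -
    have "(\<lambda>m. hgap A B z p (Suc (Suc m)) - hgap A B z p (Suc m)) sums (0 - hgap A B z p (Suc 0))"
      using hgap_LIMSEQ_zero[OF A B p(1), of z] by (intro telescope_sums LIMSEQ_Suc)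
    moreover have "(\<lambda>m. k2 * hterm (A*p\<^sup>2) (B*p\<^sup>2) z p m) sums (k2 * hseries (A*p\<^sup>2) (B*p\<^sup>2) z p)"
      using small[of A 2] small[of B 2] A B by (intro sums_mult sums) auto
    ultimately have "(\<lambda>m. (hgap A B z p (Suc (Suc m)) - hgap A B z p (Suc m))
        + k2 * hterm (A*p\<^sup>2) (B*p\<^sup>2) z p m) sums (0 - hgap A B z p (Suc 0) + k2 * hseries (A*p\<^sup>2) (B*p\<^sup>2) z p)"
      by (rule sums_add)
    moreover have "D (Suc m) = (hgap A B z p (Suc (Suc m)) - hgap A B z p (Suc m))
        + k2 * hterm (A*p\<^sup>2) (B*p\<^sup>2) z p m" for m
      using hterm_contiguous_Suc[OF A B p, of z m] unfolding D_def k1_def k2_def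
      by (simp only: diff_eq_eq)
    ultimately show ?thesis
      by simp
  qed
  ultimately have "hseries A B z p - k1 * hseries (A*p) (B*p) z p - D 0
      = 0 - hgap A B z p (Suc 0) + k2 * hseries (A*p\<^sup>2) (B*p\<^sup>2) z p"
    by (rule sums_unique2)
  moreover have "D 0 = hgap A B z p (Suc 0)"
    unfolding D_def k1_def by (rule hterm_contiguous_0[OF A B p])
  ultimately show ?thesis
    by (simp add: k1_def k2_def algebra_simps)
qed

section \<open>Contiguity and asymptotics of \<open>\<Phi>\<close>\<close>

lemma Phi_eq_hseries:
  fixes p \<alpha> \<beta> :: real
  assumes p: "0 < p"
  shows "Phi p \<alpha> \<beta> y = qpoch_inf (of_real (p powr (\<beta> + 1))) (of_real p)
      / qpoch_inf (of_real (p powr (\<alpha> + 1)) * of_real (p powr (\<beta> + 1))) (of_real p)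
      * hseries (of_real (p powr (\<alpha> + 1))) (of_real (p powr (\<beta> + 1))) (of_real (p powr (1/2)) * y)
          (of_real p)"
proof -
  have "(p powr (\<beta> + 1)) ^ k = p powr (real k * (\<beta> + 1))" for k
    using p by (simp add: powr_power)
  then have e1: "complex_of_real (p powr ((\<beta> + 1) * real k)) = complex_of_real (p powr (\<beta> + 1)) ^ k" for k
    by (simp add: mult.commute flip: of_real_power)
  have "p powr (\<alpha> + 3/2 + real k) = p powr (\<alpha> + 1) * p powr (1/2) * p ^ k" for k
    by (rule powr_add_add_nat[OF p]) simp
  then have e2: "- complex_of_real (p powr (\<alpha> + 3/2 + real k)) * y
      = - (of_real (p powr (\<alpha> + 1)) * (of_real (p powr (1/2)) * y) * of_real p ^ k)" for k
    by (simp add: mult_ac)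
  have "p powr (\<alpha> + \<beta> + 2) = p powr (\<alpha> + 1) * p powr (\<beta> + 1) * p ^ 0"
    by (rule powr_add_add_nat[OF p]) simp
  then have e3: "complex_of_real (p powr (\<alpha> + \<beta> + 2))
      = complex_of_real (p powr (\<alpha> + 1)) * complex_of_real (p powr (\<beta> + 1))"
    by simp
  show ?thesis
    unfolding Phi_def hseries_def hterm_def htail_def e1 e2 e3 ..
qed

lemma Phi_eq_hseries_shift:
  fixes p \<alpha> \<beta> :: real
  defines "A \<equiv> complex_of_real (p powr (\<alpha> + 1))" and "B \<equiv> complex_of_real (p powr (\<beta> + 1))"
    and "P \<equiv> complex_of_real p"
  assumes p: "0 < p"
  shows "Phi p (\<alpha> + real k) (\<beta> + real k) y = qpoch_inf (B * P ^ k) P / qpoch_inf (A * P ^ k * (B * P ^ k)) P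
    * hseries (A * P ^ k) (B * P ^ k) (of_real (p powr (1/2)) * y) P"
proof -
  have "p powr (\<alpha> + real k + 1) = p powr (\<alpha> + 1) * p ^ k" "p powr (\<beta> + real k + 1) = p powr (\<beta> + 1) * p ^ k"
    by (rule powr_add_nat[OF p]; simp)+
  then show ?thesis
    using Phi_eq_hseries[OF p, of "\<alpha> + real k" "\<beta> + real k" y] by (simp add: A_def B_def P_def)
qed

lemma divide_eq_rescaled:
  fixes X0 X1 Y0 Y1 c d :: "'a::field"
  assumes "X0 = c * X1" "Y0 = d * Y1" "c \<noteq> 0" "Y0 \<noteq> 0"
  shows "X1 / Y1 = X0 / Y0 * (d / c)"
  using assms by (simp add: field_simps)

lemma qpoch_inf_ratio_shift1:
  assumes "norm A < 1" "norm B < 1" "norm p < 1"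
  shows "qpoch_inf (B*p) p / qpoch_inf (A*p*(B*p)) p = qpoch_inf B p / qpoch_inf (A*B) p * shift_ratio1 A B p"
proof -
  note nz = contig_denoms_nonzero[OF assms]
  have "qpoch_inf (A*B) p = (1 - A*B) * (1 - A*B*p) * qpoch_inf (A*p*(B*p)) p"
    using qpoch_inf_shift[OF assms(3), of "A*B"] qpoch_inf_shift[OF assms(3), of "A*B*p"]
    by (simp add: mult_ac)
  moreover have "qpoch_inf (A*B) p \<noteq> 0"
    using assms norm_mult_less[of A 1 B 1] by (intro qpoch_inf_nonzero) auto
  ultimately show ?thesis
    unfolding shift_ratio1_def
    by (intro divide_eq_rescaled qpoch_inf_shift[OF assms(3)]) (use nz in simp_all)
qed

lemma qpoch_inf_ratio_shift2:
  assumes "norm A < 1" "norm B < 1" "norm p < 1"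
  shows "qpoch_inf (B*p\<^sup>2) p / qpoch_inf (A*p\<^sup>2*(B*p\<^sup>2)) p
    = qpoch_inf B p / qpoch_inf (A*B) p * shift_ratio2 A B p"
proof -
  note nz = contig_denoms_nonzero[OF assms]
  have "qpoch_inf B p = ((1 - B) * (1 - B*p)) * qpoch_inf (B*p\<^sup>2) p"
    using qpoch_inf_shift[OF assms(3), of B] qpoch_inf_shift[OF assms(3), of "B*p"]
    by (simp add: power2_eq_square mult_ac)
  moreover have "qpoch_inf (A*B) p
      = ((1 - A*B) * (1 - A*B*p) * (1 - A*B*p\<^sup>2) * (1 - A*B*p^3)) * qpoch_inf (A*p\<^sup>2*(B*p\<^sup>2)) p"
    using qpoch_inf_shift[OF assms(3), of "A*B"] qpoch_inf_shift[OF assms(3), of "A*B*p"]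
      qpoch_inf_shift[OF assms(3), of "A*B*p*p"] qpoch_inf_shift[OF assms(3), of "A*B*p*p*p"]
    by (simp add: mult_ac power2_eq_square power3_eq_cube)
  moreover have "qpoch_inf (A*B) p \<noteq> 0"
    using assms norm_mult_less[of A 1 B 1] by (intro qpoch_inf_nonzero) auto
  ultimately show ?thesis
    unfolding shift_ratio2_def by (intro divide_eq_rescaled) (use nz in simp_all)
qed

lemma bcoef_c_0_eq:
  fixes p \<alpha> \<beta> :: real
  assumes p: "0 < p"
  shows "complex_of_real (bcoef_c p \<alpha> \<beta> 0)
    = contig_c (of_real (p powr (\<alpha> + 1))) (of_real (p powr (\<beta> + 1))) (of_real p) * of_real (p powr (1/2))"
proof -
  define a where "a = p powr (\<alpha> + 1)"
  define b where "b = p powr (\<beta> + 1)"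
  define s where "s = p powr (1/2)"
  have a: "a \<noteq> 0"
    using p by (simp add: a_def)
  have "p powr (\<beta> - \<alpha>) = b / a"
    unfolding a_def b_def by (simp add: powr_diff[symmetric])
  moreover have "p powr (\<alpha> + \<beta> + 3 + 2 * real 0) = a * b * p ^ 1"
    unfolding a_def b_def by (rule powr_add_add_nat[OF p]) simp
  moreover have "p powr (\<alpha> + \<beta> + 2 + 2 * real 0) = a * b * p ^ 0"
    unfolding a_def b_def by (rule powr_add_add_nat[OF p]) simp
  moreover have "p powr (\<alpha> + \<beta> + 4 + 2 * real 0) = a * b * p ^ 2"
    unfolding a_def b_def by (rule powr_add_add_nat[OF p]) simp
  moreover have "p powr (\<alpha> + 3/2 + real 0) = a * s * p ^ 0"
    unfolding a_def s_def by (rule powr_add_add_nat[OF p]) simp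
  ultimately have "bcoef_c p \<alpha> \<beta> 0
      = (1 - b / a) * (1 + a * b * p ^ 1) / ((1 - a * b * p ^ 0) * (1 - a * b * p ^ 2)) * (a * s * p ^ 0)"
    unfolding bcoef_c_def by (simp only:)
  also have "\<dots> = ((1 - b / a) * a) * s * (1 + a * b * p) / ((1 - a * b) * (1 - a * b * p\<^sup>2))"
    by (simp add: ac_simps)
  also have "(1 - b / a) * a = a - b"
    using a by (simp add: field_simps)
  finally show ?thesis
    by (simp add: contig_c_def a_def b_def s_def)
qed

lemma bcoef_d_1_eq:
  fixes p \<alpha> \<beta> :: real
  assumes p: "0 < p"
  shows "complex_of_real (bcoef_d p \<alpha> \<beta> 1) = contig_d (of_real (p powr (\<alpha> + 1))) (of_real (p powr (\<beta> + 1))) (of_real p)"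
proof -
  define a where "a = p powr (\<alpha> + 1)"
  define b where "b = p powr (\<beta> + 1)"
  have "p powr (2 * \<alpha> + 2 + 2 * real 1) = a * a * p ^ 2"
    unfolding a_def by (rule powr_add_add_nat[OF p]) simp
  moreover have "p powr (2 * \<beta> + 2 + 2 * real 1) = b * b * p ^ 2"
    unfolding b_def by (rule powr_add_add_nat[OF p]) simp
  moreover have "p powr (2 * real 1 + \<alpha> + \<beta> + 2) = a * b * p ^ 2"
    unfolding a_def b_def by (rule powr_add_add_nat[OF p]) simp
  moreover have "p powr (\<alpha> + \<beta> + 1 + 2 * real 1) = a * b * p ^ 1"
    unfolding a_def b_def by (rule powr_add_add_nat[OF p]) simp
  moreover have "p powr (\<alpha> + \<beta> + 2 + 2 * real 1) = a * b * p ^ 2"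
    unfolding a_def b_def by (rule powr_add_add_nat[OF p]) simp
  moreover have "p powr (\<alpha> + \<beta> + 3 + 2 * real 1) = a * b * p ^ 3"
    unfolding a_def b_def by (rule powr_add_add_nat[OF p]) simp
  ultimately have "bcoef_d p \<alpha> \<beta> 1 = (1 - a * a * p ^ 2) * (1 - b * b * p ^ 2) * (a * b * p ^ 2)
      / ((1 - a * b * p ^ 1) * (1 - a * b * p ^ 2)\<^sup>2 * (1 - a * b * p ^ 3))"
    unfolding bcoef_d_def by (simp only:)
  then show ?thesis
    by (simp add: contig_d_def a_def b_def mult_ac power2_eq_square)
qed

lemma Phi_contiguous:
  fixes p \<alpha> \<beta> :: real
  assumes p: "0 < p" "p < 1" and \<alpha>\<beta>: "\<alpha> > -1" "\<beta> > -1"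
  shows "Phi p \<alpha> \<beta> y = (1 + of_real (bcoef_c p \<alpha> \<beta> 0) * y) * Phi p (\<alpha> + 1) (\<beta> + 1) y
    + of_real (bcoef_d p \<alpha> \<beta> 1) * y\<^sup>2 * Phi p (\<alpha> + 2) (\<beta> + 2) y"
proof -
  define A where "A = complex_of_real (p powr (\<alpha> + 1))"
  define B where "B = complex_of_real (p powr (\<beta> + 1))"
  define P where "P = complex_of_real p"
  define s where "s = p powr (1/2)"
  define z where "z = complex_of_real s * y"
  have A: "norm A < 1" and B: "norm B < 1"
    unfolding A_def B_def using powr_lt_one[OF p] \<alpha>\<beta> by simp_all
  have P: "norm P < 1" "P \<noteq> 0"
    using p by (auto simp: P_def)
  have Phi0: "Phi p \<alpha> \<beta> y = qpoch_inf B P / qpoch_inf (A*B) P * hseries A B z P"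
    using Phi_eq_hseries_shift[OF p(1), where \<alpha> = \<alpha> and \<beta> = \<beta> and k = 0 and y = y] by (simp add: A_def B_def P_def z_def s_def)
  have Phi1: "Phi p (\<alpha> + 1) (\<beta> + 1) y
      = qpoch_inf (B*P) P / qpoch_inf (A*P*(B*P)) P * hseries (A*P) (B*P) z P"
    using Phi_eq_hseries_shift[OF p(1), where \<alpha> = \<alpha> and \<beta> = \<beta> and k = 1 and y = y] by (simp add: A_def B_def P_def z_def s_def)
  have Phi2: "Phi p (\<alpha> + 2) (\<beta> + 2) y
      = qpoch_inf (B*P\<^sup>2) P / qpoch_inf (A*P\<^sup>2*(B*P\<^sup>2)) P * hseries (A*P\<^sup>2) (B*P\<^sup>2) z P"
    using Phi_eq_hseries_shift[OF p(1), where \<alpha> = \<alpha> and \<beta> = \<beta> and k = 2 and y = y] by (simp add: A_def B_def P_def z_def s_def)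
  have c: "of_real (bcoef_c p \<alpha> \<beta> 0) * y = contig_c A B P * z"
    using bcoef_c_0_eq[OF p(1), of \<alpha> \<beta>] by (simp add: A_def B_def P_def z_def s_def)
  have "s\<^sup>2 = p"
    using p by (simp add: s_def powr_half_sqrt)
  then have "z\<^sup>2 / P = y\<^sup>2"
    using P by (simp add: z_def P_def power_mult_distrib flip: of_real_power)
  then have d: "of_real (bcoef_d p \<alpha> \<beta> 1) * y\<^sup>2 = contig_d A B P * (z\<^sup>2 / P)"
    using bcoef_d_1_eq[OF p(1), of \<alpha> \<beta>] by (simp add: A_def B_def P_def)
  define R where "R = qpoch_inf B P / qpoch_inf (A*B) P"
  have "Phi p (\<alpha> + 1) (\<beta> + 1) y = R * shift_ratio1 A B P * hseries (A*P) (B*P) z P"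
    and "Phi p (\<alpha> + 2) (\<beta> + 2) y = R * shift_ratio2 A B P * hseries (A*P\<^sup>2) (B*P\<^sup>2) z P"
    unfolding Phi1 Phi2 qpoch_inf_ratio_shift1[OF A B P(1)] qpoch_inf_ratio_shift2[OF A B P(1)] R_def
    by simp_all
  then show ?thesis
    unfolding Phi0 R_def[symmetric] c d hseries_contiguous[OF A B P, of z]
    by (simp add: algebra_simps)
qed

lemma Phi_shift_recurrence:
  fixes p \<alpha> \<beta> :: real
  assumes p: "0 < p" "p < 1" and \<alpha>\<beta>: "\<alpha> > -1" "\<beta> > -1"
  shows "Phi p (\<alpha> + real n) (\<beta> + real n) y
    = (1 + of_real (bcoef_c p \<alpha> \<beta> n) * y) * Phi p (\<alpha> + real (Suc n)) (\<beta> + real (Suc n)) y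
      + of_real (bcoef_d p \<alpha> \<beta> (Suc n)) * y\<^sup>2 * Phi p (\<alpha> + real (Suc (Suc n))) (\<beta> + real (Suc (Suc n))) y"
proof -
  have "\<alpha> + real n > -1" "\<beta> + real n > -1"
    using \<alpha>\<beta> by auto
  moreover have "\<alpha> + real n + 1 = \<alpha> + real (Suc n)" "\<beta> + real n + 1 = \<beta> + real (Suc n)"
    "\<alpha> + real n + 2 = \<alpha> + real (Suc (Suc n))" "\<beta> + real n + 2 = \<beta> + real (Suc (Suc n))"
    by simp_all
  ultimately show ?thesis
    using Phi_contiguous[OF p, of "\<alpha> + real n" "\<beta> + real n" y]
    by (simp only: bcoef_c_shift bcoef_d_shift add_0_right add.commute[of n 1] Suc_eq_plus1_left)
qed

lemma Phi_shift_near_one: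
  fixes p \<alpha> \<beta> R :: real
  assumes p: "0 < p" "p < 1" and \<alpha>\<beta>: "\<alpha> > -1" "\<beta> > -1"
  obtains \<epsilon> where "\<epsilon> \<longlonglongrightarrow> 0"
    and "\<And>n y. norm y \<le> R \<Longrightarrow> norm (Phi p (\<alpha> + real n) (\<beta> + real n) y - 1) \<le> \<epsilon> n"
proof
  define P where "P = complex_of_real p"
  define s where "s = p powr (1/2)"
  define A where "A n = complex_of_real (p powr (\<alpha> + 1)) * P ^ n" for n
  define B where "B n = complex_of_real (p powr (\<beta> + 1)) * P ^ n" for n
  define C where "C n = qpoch_inf (B n) P / qpoch_inf (A n * B n) P" for n
  define \<delta> where "\<delta> n = (exp (norm (A n) * (s * R) / (1 - p)) - 1)
    + hbound (s * R) p * (norm (B n) / (1 - norm (B n)))" for n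
  define \<epsilon> where "\<epsilon> n = norm (C n) * \<delta> n + norm (C n - 1)" for n
  have P: "norm P < 1" "norm P = p"
    using p by (auto simp: P_def)
  have AB: "norm (A n) < 1" "norm (B n) < 1" for n
    unfolding A_def B_def using P(1) powr_lt_one[OF p] \<alpha>\<beta>
    by (auto intro!: norm_mult_power_less_one)
  show "norm (Phi p (\<alpha> + real n) (\<beta> + real n) y - 1) \<le> \<epsilon> n" if y: "norm y \<le> R" for n y
  proof -
    have "norm (of_real s * y) \<le> s * R"
      using y by (simp add: norm_mult s_def mult_left_mono)
    then have series: "norm (hseries (A n) (B n) (of_real s * y) P - 1) \<le> \<delta> n"
      unfolding \<delta>_def P(2)[symmetric] using AB[of n]
      by (intro norm_hseries_diff_one_le[OF P(1)]) auto
    have "Phi p (\<alpha> + real n) (\<beta> + real n) y = C n * hseries (A n) (B n) (of_real s * y) P"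
      unfolding C_def A_def B_def P_def s_def by (rule Phi_eq_hseries_shift[OF p(1)])
    then have "Phi p (\<alpha> + real n) (\<beta> + real n) y - 1
        = C n * (hseries (A n) (B n) (of_real s * y) P - 1) + (C n - 1)"
      by (simp add: algebra_simps)
    then have "norm (Phi p (\<alpha> + real n) (\<beta> + real n) y - 1)
        \<le> norm (C n) * norm (hseries (A n) (B n) (of_real s * y) P - 1) + norm (C n - 1)"
      unfolding norm_mult[symmetric] by (simp only: norm_triangle_ineq)
    with series show ?thesis
      unfolding \<epsilon>_def by (smt (verit) mult_left_mono norm_ge_zero)
  qed
  have A0: "A \<longlonglongrightarrow> 0" and B0: "B \<longlonglongrightarrow> 0"
    unfolding A_def B_def using P(1) by (auto intro!: tendsto_mult_right_zero LIMSEQ_power_zero)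
  then have "C \<longlonglongrightarrow> 1 / 1"
    unfolding C_def by (intro tendsto_divide qpoch_inf_tendsto_one[OF P(1)] tendsto_mult_zero) auto
  moreover have "\<delta> \<longlonglongrightarrow> (exp (0 * (s * R) / (1 - p)) - 1) + hbound (s * R) p * (0 / (1 - 0))"
    unfolding \<delta>_def using p A0 B0 by (intro tendsto_intros tendsto_norm_zero) auto
  ultimately have "\<epsilon> \<longlonglongrightarrow> norm (1 :: complex) * 0 + norm ((1 :: complex) - 1)"
    unfolding \<epsilon>_def by (intro tendsto_intros) auto
  then show "\<epsilon> \<longlonglongrightarrow> 0"
    by simp
qed

section \<open>Convergence of the reversed polynomials\<close>

lemma Phi_eq_brev_combination:
  fixes p \<alpha> \<beta> :: real
  assumes p: "0 < p" "p < 1" and \<alpha>\<beta>: "\<alpha> > -1" "\<beta> > -1"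
  shows "Phi p \<alpha> \<beta> x = brev p \<alpha> \<beta> n x * Phi p (\<alpha> + real n) (\<beta> + real n) x
    + of_real (bcoef_d p \<alpha> \<beta> n) * x\<^sup>2
      * fst (recur_pair (\<lambda>k. of_real (bcoef_c p \<alpha> \<beta> k)) (\<lambda>k. of_real (bcoef_d p \<alpha> \<beta> k)) x n)
      * Phi p (\<alpha> + real (Suc n)) (\<beta> + real (Suc n)) x"
proof -
  have "Phi p (\<alpha> + real 0) (\<beta> + real 0) x
      = snd (recur_pair (\<lambda>k. of_real (bcoef_c p \<alpha> \<beta> k)) (\<lambda>k. of_real (bcoef_d p \<alpha> \<beta> k)) x n)
          * Phi p (\<alpha> + real n) (\<beta> + real n) x
        + of_real (bcoef_d p \<alpha> \<beta> n) * x\<^sup>2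
          * fst (recur_pair (\<lambda>k. of_real (bcoef_c p \<alpha> \<beta> k)) (\<lambda>k. of_real (bcoef_d p \<alpha> \<beta> k)) x n)
          * Phi p (\<alpha> + real (Suc n)) (\<beta> + real (Suc n)) x"
    by (rule recur_pair_conservation[where F = "\<lambda>n. Phi p (\<alpha> + real n) (\<beta> + real n) x"])
      (rule Phi_shift_recurrence[OF p \<alpha>\<beta>])
  then show ?thesis
    by (simp only: brev_eq_recur_pair of_nat_0 add_0_right)
qed

lemma norm_brev_minus_Phi_le:
  fixes p \<alpha> \<beta> R :: real and \<epsilon> :: "nat \<Rightarrow> real"
  defines "M \<equiv> exp (\<Sum>k. \<bar>bcoef_c p \<alpha> \<beta> k\<bar> * R + \<bar>bcoef_d p \<alpha> \<beta> k\<bar> * R\<^sup>2)"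
  assumes p: "0 < p" "p < 1" and \<alpha>\<beta>: "\<alpha> > -1" "\<beta> > -1" and x: "norm x \<le> R"
    and \<epsilon>: "\<And>n y. norm y \<le> R \<Longrightarrow> norm (Phi p (\<alpha> + real n) (\<beta> + real n) y - 1) \<le> \<epsilon> n"
  shows "norm (brev p \<alpha> \<beta> n x - Phi p \<alpha> \<beta> x)
    \<le> M * \<epsilon> n + \<bar>bcoef_d p \<alpha> \<beta> n\<bar> * R\<^sup>2 * M * (1 + \<epsilon> (Suc n))"
proof -
  define c where "c = (\<lambda>k. complex_of_real (bcoef_c p \<alpha> \<beta> k))"
  define d where "d = (\<lambda>k. complex_of_real (bcoef_d p \<alpha> \<beta> k))"
  define F where "F n = Phi p (\<alpha> + real n) (\<beta> + real n) x" for n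
  define f where "f = fst (recur_pair c d x n)"
  have "summable (\<lambda>k. norm (c k) * R + norm (d k) * R\<^sup>2)"
    unfolding c_def d_def norm_of_real
    using summable_abs_bcoef_c[OF p \<alpha>\<beta>] summable_abs_bcoef_d[OF p \<alpha>\<beta>]
    by (intro summable_add summable_mult2)
  moreover have "M = exp (\<Sum>k. norm (c k) * R + norm (d k) * R\<^sup>2)"
    by (simp add: M_def c_def d_def)
  moreover have "brev p \<alpha> \<beta> n x = snd (recur_pair c d x n)"
    unfolding c_def d_def by (rule brev_eq_recur_pair)
  ultimately have bounds: "norm f \<le> M" "norm (brev p \<alpha> \<beta> n x) \<le> M"
    using norm_recur_pair_le[OF x, of c d n] by (simp_all add: f_def)
  have M: "0 \<le> M"
    by (simp add: M_def)
  have F1: "norm (1 - F n) \<le> \<epsilon> n"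
    using \<epsilon>[OF x, of n] by (simp add: F_def norm_minus_commute)
  have F2: "norm (F (Suc n)) \<le> 1 + \<epsilon> (Suc n)"
    using \<epsilon>[OF x, of "Suc n"] norm_triangle_ineq2[of "F (Suc n)" 1] by (simp add: F_def)
  have "brev p \<alpha> \<beta> n x - Phi p \<alpha> \<beta> x
      = brev p \<alpha> \<beta> n x * (1 - F n) - of_real (bcoef_d p \<alpha> \<beta> n) * x\<^sup>2 * f * F (Suc n)"
    using Phi_eq_brev_combination[OF p \<alpha>\<beta>, of x n] unfolding F_def f_def c_def d_def
    by (simp add: algebra_simps)
  also have "norm \<dots> \<le> norm (brev p \<alpha> \<beta> n x * (1 - F n)) + norm (of_real (bcoef_d p \<alpha> \<beta> n) * x\<^sup>2 * f * F (Suc n))"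
    by (rule norm_triangle_ineq4)
  also have "\<dots> = norm (brev p \<alpha> \<beta> n x) * norm (1 - F n)
      + \<bar>bcoef_d p \<alpha> \<beta> n\<bar> * norm x ^ 2 * norm f * norm (F (Suc n))"
    by (simp add: norm_mult norm_power)
  also have "\<dots> \<le> M * \<epsilon> n + \<bar>bcoef_d p \<alpha> \<beta> n\<bar> * R\<^sup>2 * M * (1 + \<epsilon> (Suc n))"
  proof (rule add_mono)
    show "norm (brev p \<alpha> \<beta> n x) * norm (1 - F n) \<le> M * \<epsilon> n"
      using bounds F1 M by (intro mult_mono) auto
    have "norm x ^ 2 \<le> R\<^sup>2"
      using x by (intro power_mono) auto
    then show "\<bar>bcoef_d p \<alpha> \<beta> n\<bar> * norm x ^ 2 * norm f * norm (F (Suc n))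
        \<le> \<bar>bcoef_d p \<alpha> \<beta> n\<bar> * R\<^sup>2 * M * (1 + \<epsilon> (Suc n))"
      using bounds F2 M by (intro mult_mono mult_left_mono) auto
  qed
  finally show ?thesis .
qed

lemma uniform_limit_sequentially_le:
  assumes "\<And>n x. x \<in> S \<Longrightarrow> dist (f n x) (g x) \<le> e n" and "e \<longlonglongrightarrow> 0"
  shows "uniform_limit S f g sequentially"
proof (rule uniform_limitI)
  fix \<epsilon> :: real
  assume "0 < \<epsilon>"
  with assms(2) have "\<forall>\<^sub>F n in sequentially. e n < \<epsilon>"
    by (rule order_tendstoD(2))
  then show "\<forall>\<^sub>F n in sequentially. \<forall>x\<in>S. dist (f n x) (g x) < \<epsilon>"
    by (rule eventually_mono) (use assms(1) in \<open>meson order.strict_trans1\<close>)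
qed

theorem theorem5p1:
  fixes q \<alpha> \<beta> :: real
  assumes "0 < q" "q < 1" "\<alpha> > -1" "\<beta> > -1"
  shows "\<forall>K :: complex set. compact K \<longrightarrow>
           uniform_limit K (\<lambda>n x. brev (sqrt q) \<alpha> \<beta> n x) (Phi (sqrt q) \<alpha> \<beta>) sequentially"
proof (intro allI impI)
  fix K :: "complex set"
  assume "compact K"
  then obtain R where R: "\<And>x. x \<in> K \<Longrightarrow> norm x \<le> R"
    by (meson bounded_iff compact_imp_bounded)
  define p where "p = sqrt q"
  have p: "0 < p" "p < 1"
    using assms by (auto simp: p_def)
  obtain \<epsilon> where \<epsilon>: "\<epsilon> \<longlonglongrightarrow> 0"
    and \<epsilon>_bound: "\<And>n y. norm y \<le> R \<Longrightarrow> norm (Phi p (\<alpha> + real n) (\<beta> + real n) y - 1) \<le> \<epsilon> n"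
    using Phi_shift_near_one[OF p assms(3,4)] by blast
  define M where "M = exp (\<Sum>k. \<bar>bcoef_c p \<alpha> \<beta> k\<bar> * R + \<bar>bcoef_d p \<alpha> \<beta> k\<bar> * R\<^sup>2)"
  define e where "e n = M * \<epsilon> n + \<bar>bcoef_d p \<alpha> \<beta> n\<bar> * R\<^sup>2 * M * (1 + \<epsilon> (Suc n))" for n
  have "(\<lambda>n. \<bar>bcoef_d p \<alpha> \<beta> n\<bar>) \<longlonglongrightarrow> 0"
    by (rule summable_LIMSEQ_zero[OF summable_abs_bcoef_d[OF p assms(3,4)]])
  then have "e \<longlonglongrightarrow> M * 0 + 0 * R\<^sup>2 * M * (1 + 0)"
    unfolding e_def using \<epsilon> by (intro tendsto_intros LIMSEQ_Suc)
  moreover have "dist (brev p \<alpha> \<beta> n x) (Phi p \<alpha> \<beta> x) \<le> e n" if "x \<in> K" for n x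
    unfolding dist_norm e_def M_def using norm_brev_minus_Phi_le[OF p assms(3,4) R[OF that] \<epsilon>_bound] .
  ultimately show "uniform_limit K (\<lambda>n x. brev (sqrt q) \<alpha> \<beta> n x) (Phi (sqrt q) \<alpha> \<beta>) sequentially"
    unfolding p_def[symmetric] by (intro uniform_limit_sequentially_le[where e = e]) auto
qed

end
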